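(* Let $\mathbf{G}=(G_1,\dots,G_5)$ be a $5$-multigraph on four vertices not containing three crossing pairs and set $e=e(\mathbf{G})$. (i) If $e\ge 23$, then there exists an enumeration $V(\mathbf{G})=\{w,x,y,z\}$ such that $e(w,x)+e(y,z)\le 5$. (ii) If $e\ge 22$, then there exist two distinct vertices $u$ and $v$ with $e(u,v)=5$.
   Context: A $5$-multigraph $\mathbf{G}=(G_1,\dots,G_5)$ is a $5$-tuple of simple graphs on a common vertex set $V(\mathbf{G})$; $e(\mathbf{G})=\sum_{i=1}^5 e(G_i)$, and for distinct vertices $u,v$ the multiplicity $e(u,v)$ is the number of indices $i$ with $uv\in E(G_i)$. $\mathbf{G}$ contains three crossing pairs if there are three distinct indices $i,j,k\in[5]$ and four distinct vertices $w,x,y,z$ with $wx,yz\in E(G_i)$, $wy,xz\in E(G_j)$ and $wz,xy\in E(G_k)$. *)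

theory Defs
  imports Main
begin

definition simple_graph_on :: "'a set \<Rightarrow> ('a \<Rightarrow> 'a \<Rightarrow> bool) \<Rightarrow> bool" where
  "simple_graph_on V E \<longleftrightarrow>
     (\<forall>u v. E u v \<longrightarrow> u \<in> V \<and> v \<in> V) \<and> (\<forall>u. \<not> E u u) \<and> (\<forall>u v. E u v \<longrightarrow> E v u)"

definition multigraph5 :: "'a set \<Rightarrow> (nat \<Rightarrow> 'a \<Rightarrow> 'a \<Rightarrow> bool) \<Rightarrow> bool" where
  "multigraph5 V G \<longleftrightarrow> (\<forall>i\<in>{1..5}. simple_graph_on V (G i))"

definition edges :: "('a \<Rightarrow> 'a \<Rightarrow> bool) \<Rightarrow> 'a set set" where
  "edges E = {{u, v} | u v. E u v}"

definition total_edges :: "(nat \<Rightarrow> 'a \<Rightarrow> 'a \<Rightarrow> bool) \<Rightarrow> nat" where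
  "total_edges G = (\<Sum>i\<in>{1..5}. card (edges (G i)))"

definition mult :: "(nat \<Rightarrow> 'a \<Rightarrow> 'a \<Rightarrow> bool) \<Rightarrow> 'a \<Rightarrow> 'a \<Rightarrow> nat" where
  "mult G u v = card {i\<in>{1..5}. G i u v}"

definition three_crossing_pairs :: "'a set \<Rightarrow> (nat \<Rightarrow> 'a \<Rightarrow> 'a \<Rightarrow> bool) \<Rightarrow> bool" where
  "three_crossing_pairs V G \<longleftrightarrow>
     (\<exists>i j k w x y z. i \<in> {1..5} \<and> j \<in> {1..5} \<and> k \<in> {1..5} \<and>
        i \<noteq> j \<and> i \<noteq> k \<and> j \<noteq> k \<and>
        w \<in> V \<and> x \<in> V \<and> y \<in> V \<and> z \<in> V \<and> distinct [w, x, y, z] \<and>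
        G i w x \<and> G i y z \<and> G j w y \<and> G j x z \<and> G k w z \<and> G k x y)"

end

theory Submission
  imports Defs
begin

text \<open>The six pairs of four vertices w, x, y, z form three perfect matchings
  {wx, yz}, {wy, xz}, {wz, xy}; write e(M) for the total multiplicity of the two edges of a
  matching M and S_M for the set of colours whose graph contains both of them.
  Inclusion-exclusion gives e(M) \<le> 5 + |S_M|, and e(G) is the sum of the three e(M).
  Three crossing pairs are precisely distinct representatives of the three sets S_M, so if
  there are none, Hall's condition fails: one S_M is empty, two have at most one element, or
  all three have at most two. Combined with e(M) \<le> 10, or e(M) \<le> 8 when no pair has
  multiplicity 5, each alternative forces e(G) \<le> 22 unless some e(M) \<le> 5, and e(G) \<le> 21
  unless some multiplicity equals 5.\<close>

lemma exists_distinct_reps: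
  assumes "1 \<le> card A" "2 \<le> card B" "3 \<le> card C"
  shows "\<exists>a\<in>A. \<exists>b\<in>B. \<exists>c\<in>C. distinct [a, b, c]"
proof -
  obtain a where a: "a \<in> A" using assms(1) by fastforce
  have "\<not> B \<subseteq> {a}" using card_mono[of "{a}" B] assms(2) by auto
  then obtain b where b: "b \<in> B" "b \<noteq> a" by blast
  have "card {a, b} \<le> 2" by (simp add: card_insert_if)
  then have "\<not> C \<subseteq> {a, b}" using card_mono[of "{a, b}" C] assms(3) by auto
  then obtain c where c: "c \<in> C" "c \<noteq> a" "c \<noteq> b" by blast
  have "distinct [a, b, c]" using b c by auto
  with a b c show ?thesis by blast
qed

lemma card_cases_if_no_distinct_reps:
  assumes "\<not> (\<exists>a\<in>A. \<exists>b\<in>B. \<exists>c\<in>C. distinct [a, b, c])"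
  shows "card A = 0 \<or> card B = 0 \<or> card C = 0
    \<or> card A \<le> 1 \<and> card B \<le> 1 \<or> card A \<le> 1 \<and> card C \<le> 1 \<or> card B \<le> 1 \<and> card C \<le> 1
    \<or> card A \<le> 2 \<and> card B \<le> 2 \<and> card C \<le> 2"
proof -
  have card_bound: "\<not> (1 \<le> card X \<and> 2 \<le> card Y \<and> 3 \<le> card Z)"
    if "\<not> (\<exists>x\<in>X. \<exists>y\<in>Y. \<exists>z\<in>Z. distinct [x, y, z])" for X Y Z
    using exists_distinct_reps that by blast
  have "\<not> (1 \<le> card A \<and> 2 \<le> card B \<and> 3 \<le> card C)"
    "\<not> (1 \<le> card A \<and> 2 \<le> card C \<and> 3 \<le> card B)"
    "\<not> (1 \<le> card B \<and> 2 \<le> card A \<and> 3 \<le> card C)"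
    "\<not> (1 \<le> card B \<and> 2 \<le> card C \<and> 3 \<le> card A)"
    "\<not> (1 \<le> card C \<and> 2 \<le> card A \<and> 3 \<le> card B)"
    "\<not> (1 \<le> card C \<and> 2 \<le> card B \<and> 3 \<le> card A)"
    by (rule card_bound, use assms in fastforce)+
  then show ?thesis by presburger
qed

lemma mem_edges_iff:
  assumes "\<And>u v. E u v \<Longrightarrow> E v u"
  shows "{u, v} \<in> edges E \<longleftrightarrow> E u v"
  using assms unfolding edges_def by (auto simp: doubleton_eq_iff)

lemma edges_subset_pairs:
  assumes "simple_graph_on V E"
  shows "edges E \<subseteq> {{u, v} | u v. u \<in> V \<and> v \<in> V \<and> u \<noteq> v}"
  using assms unfolding simple_graph_on_def edges_def by blast

lemma total_edges_eq_sum_over_pairs: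
  assumes "finite P" "\<And>i. i \<in> {1..5} \<Longrightarrow> edges (G i) \<subseteq> P"
  shows "total_edges G = (\<Sum>p\<in>P. card {i\<in>{1..5}. p \<in> edges (G i)})"
proof -
  have "total_edges G = (\<Sum>i\<in>{1..5::nat}. \<Sum>p\<in>P. of_bool (p \<in> edges (G i)))"
    unfolding total_edges_def using assms
    by (intro sum.cong) (simp_all add: Int_absorb1 flip: Int_def)
  also have "\<dots> = (\<Sum>p\<in>P. card {i\<in>{1..5}. p \<in> edges (G i)})"
    by (subst sum.swap) (simp add: Int_def)
  finally show ?thesis .
qed

lemma total_edges_four_vertices:
  assumes "multigraph5 {w, x, y, z} G" "distinct [w, x, y, z]"
  shows "total_edges G
    = mult G w x + mult G y z + mult G w y + mult G x z + mult G w z + mult G x y"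
proof -
  let ?P = "{{w, x}, {y, z}, {w, y}, {x, z}, {w, z}, {x, y}}"
  let ?colours = "\<lambda>p. card {i\<in>{1..5}. p \<in> edges (G i)}"
  have graph: "simple_graph_on {w, x, y, z} (G i)" if "i \<in> {1..5}" for i
    using assms(1) that unfolding multigraph5_def by blast
  have colours_mult: "?colours {u, v} = mult G u v" for u v
    unfolding mult_def using graph
    by (intro arg_cong[where f = card] Collect_cong) (auto simp: mem_edges_iff simple_graph_on_def)
  have "edges (G i) \<subseteq> ?P" if i: "i \<in> {1..5}" for i
  proof
    fix p assume "p \<in> edges (G i)"
    then obtain u v where "p = {u, v}" "u \<in> {w, x, y, z}" "v \<in> {w, x, y, z}" "u \<noteq> v"
      using edges_subset_pairs[OF graph[OF i]] by blast
    then show "p \<in> ?P"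
      by (elim insertE emptyE) (simp_all add: insert_commute)
  qed
  then have "total_edges G = (\<Sum>p\<in>?P. ?colours p)"
    by (intro total_edges_eq_sum_over_pairs) simp_all
  also have "\<dots> = ?colours {w, x} + ?colours {y, z} + ?colours {w, y} + ?colours {x, z}
      + ?colours {w, z} + ?colours {x, y}"
    using assms(2) by (auto simp: doubleton_eq_iff add.assoc)
  finally show ?thesis
    by (simp only: colours_mult)
qed

lemma card_le_if_subset_atLeastAtMost: "A \<subseteq> {1..n::nat} \<Longrightarrow> card A \<le> n"
  using card_mono[of "{1..n}" A] by simp

lemma mult_le_5: "mult G u v \<le> 5"
  unfolding mult_def by (rule card_le_if_subset_atLeastAtMost) blast

definition matching_colours ::
    "(nat \<Rightarrow> 'a \<Rightarrow> 'a \<Rightarrow> bool) \<Rightarrow> 'a \<Rightarrow> 'a \<Rightarrow> 'a \<Rightarrow> 'a \<Rightarrow> nat set" where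
  "matching_colours G a b c d = {i\<in>{1..5}. G i a b \<and> G i c d}"

lemma mult_add_mult_le:
  "mult G a b + mult G c d \<le> 5 + card (matching_colours G a b c d)"
proof -
  let ?A = "{i\<in>{1..5::nat}. G i a b}" and ?B = "{i\<in>{1..5::nat}. G i c d}"
  have "card (?A \<union> ?B) \<le> 5"
    by (rule card_le_if_subset_atLeastAtMost) blast
  moreover have "card ?A + card ?B = card (?A \<union> ?B) + card (?A \<inter> ?B)"
    by (rule card_Un_Int) simp_all
  moreover have "card (?A \<inter> ?B) = card (matching_colours G a b c d)"
    unfolding matching_colours_def by (rule arg_cong[where f = card]) blast
  ultimately show ?thesis
    unfolding mult_def by linarith
qed

lemma no_distinct_matching_colours:
  assumes "\<not> three_crossing_pairs {w, x, y, z} G" "distinct [w, x, y, z]"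
  shows "\<not> (\<exists>i\<in>matching_colours G w x y z. \<exists>j\<in>matching_colours G w y x z.
    \<exists>k\<in>matching_colours G w z x y. distinct [i, j, k])"
proof
  assume "\<exists>i\<in>matching_colours G w x y z. \<exists>j\<in>matching_colours G w y x z.
    \<exists>k\<in>matching_colours G w z x y. distinct [i, j, k]"
  then obtain i j k where colours: "i \<in> {1..5}" "j \<in> {1..5}" "k \<in> {1..5}" "distinct [i, j, k]"
    "G i w x" "G i y z" "G j w y" "G j x z" "G k w z" "G k x y"
    unfolding matching_colours_def by auto
  have "three_crossing_pairs {w, x, y, z} G"
    unfolding three_crossing_pairs_def
    by (rule exI[of _ i], rule exI[of _ j], rule exI[of _ k], rule exI[of _ w], rule exI[of _ x],
        rule exI[of _ y], rule exI[of _ z]) (use colours assms(2) in simp)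
  with assms(1) show False ..
qed

lemma perfect_matching_mult_bounds:
  assumes "multigraph5 {w, x, y, z} G" "distinct [w, x, y, z]"
    and "\<not> three_crossing_pairs {w, x, y, z} G"
  shows "23 \<le> total_edges G \<Longrightarrow> mult G w x + mult G y z \<le> 5 \<or> mult G w y + mult G x z \<le> 5
      \<or> mult G w z + mult G x y \<le> 5"
    and "22 \<le> total_edges G \<Longrightarrow>
      5 \<in> {mult G w x, mult G y z, mult G w y, mult G x z, mult G w z, mult G x y}"
proof -
  note total = total_edges_four_vertices[OF assms(1,2)]
  note matchings = mult_add_mult_le[of G w x y z] mult_add_mult_le[of G w y x z]
    mult_add_mult_le[of G w z x y]
  note le_5 = mult_le_5[of G w x] mult_le_5[of G y z] mult_le_5[of G w y] mult_le_5[of G x z]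
    mult_le_5[of G w z] mult_le_5[of G x y]
  note hall = card_cases_if_no_distinct_reps[OF no_distinct_matching_colours[OF assms(3,2)]]
  show "mult G w x + mult G y z \<le> 5 \<or> mult G w y + mult G x z \<le> 5 \<or> mult G w z + mult G x y \<le> 5"
    if "23 \<le> total_edges G"
  proof (rule ccontr)
    assume "\<not> ?thesis"
    then have "6 \<le> mult G w x + mult G y z" "6 \<le> mult G w y + mult G x z"
      "6 \<le> mult G w z + mult G x y"
      by auto
    with hall show False
      using that total matchings le_5 by (elim disjE conjE) linarith+
  qed
  show "5 \<in> {mult G w x, mult G y z, mult G w y, mult G x z, mult G w z, mult G x y}"
    if "22 \<le> total_edges G"
  proof (rule ccontr)
    assume "5 \<notin> {mult G w x, mult G y z, mult G w y, mult G x z, mult G w z, mult G x y}"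
    with le_5 have "mult G w x \<le> 4" "mult G y z \<le> 4" "mult G w y \<le> 4" "mult G x z \<le> 4"
      "mult G w z \<le> 4" "mult G x y \<le> 4"
      by auto
    with hall show False
      using that total matchings by (elim disjE conjE) linarith+
  qed
qed

theorem lemma3p5:
  fixes V :: "'a set" and G :: "nat \<Rightarrow> 'a \<Rightarrow> 'a \<Rightarrow> bool"
  assumes "multigraph5 V G"
    and "finite V" and "card V = 4"
    and "\<not> three_crossing_pairs V G"
  shows "(total_edges G \<ge> 23 \<longrightarrow>
            (\<exists>w x y z. V = {w, x, y, z} \<and> distinct [w, x, y, z] \<and>
                        mult G w x + mult G y z \<le> 5))
       \<and> (total_edges G \<ge> 22 \<longrightarrow>
            (\<exists>u v. u \<in> V \<and> v \<in> V \<and> u \<noteq> v \<and> mult G u v = 5))"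
proof -
  obtain xs where "distinct xs" "set xs = V"
    using finite_distinct_list[OF assms(2)] by blast
  moreover from this have "length xs = 4"
    using assms(3) distinct_card by fastforce
  ultimately obtain w x y z where V: "V = {w, x, y, z}" and distinct: "distinct [w, x, y, z]"
    by (auto simp: numeral_eq_Suc length_Suc_conv)
  note bounds = perfect_matching_mult_bounds[OF _ distinct, folded V, OF assms(1,4)]
  have swapped:
    "V = {w, y, x, z}" "distinct [w, y, x, z]" "V = {w, z, x, y}" "distinct [w, z, x, y]"
    using V distinct by auto
  show ?thesis
  proof (intro conjI impI)
    assume "23 \<le> total_edges G"
    with bounds(1)
    show "\<exists>w x y z. V = {w, x, y, z} \<and> distinct [w, x, y, z] \<and> mult G w x + mult G y z \<le> 5"
      using V distinct swapped by blast
  next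
    assume "22 \<le> total_edges G"
    with bounds(2) show "\<exists>u v. u \<in> V \<and> v \<in> V \<and> u \<noteq> v \<and> mult G u v = 5"
      using V distinct by fastforce
  qed
qed

end
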